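(* Let $\ell\in\mathbb{N}$, $r\in\mathbb{N}_0$, and let $J_0,\dots,J_\ell,I_1,\dots,I_r\subseteq\mathbb{R}$ satisfy conditions (i)–(iv) of the definition of a connected CL-graph, with $G$ the intersection graph on $J_0,\dots,J_\ell,I_1,\dots,I_r$. For $0\le j\le\ell-1$ put $F_j=\{J_j,J_{j+1}\}\cup\{I_i: 1\le i\le r,\ j\in I_i\}$. Then the maximal cliques of $G$ are exactly $F_0,F_1,\dots,F_{\ell-1}$; in particular $c(G)=\ell$, and $\ell(G)=\ell$ (with $J_0,J_1,\dots,J_\ell$ forming an induced path of length $\ell$).
   Context: $c(G)$ is the number of maximal cliques of $G$; $\ell(G)$ is the length (number of edges) of a longest induced path of the connected graph $G$. Vertices of the intersection graph are identified with the sets defining them. Intersection graph: given a finite list of sets $S_1,\dots,S_m$, the intersection graph on this list has one vertex for each $S_i$ (distinct indices give distinct vertices), and the vertices corresponding to $S_i$ and $S_j$ ($i\neq j$) are adjacent iff $S_i\cap S_j\neq\emptyset$. Conditions defining a connected CL-graph, with $\mathbb{N}=\{1,2,\dots\}$, $\mathbb{N}_0=\{0,1,2,\dots\}$: (i) $J_0=\{0\}$ and $J_j=[j-1,j]$ for $1\le j\le \ell$; (ii) for each $1\le i\le r$ there is some $t\in\mathbb{N}$ with $I_i=[a_1,b_1]\cup[a_2,b_2]\cup\cdots\cup[a_t,b_t]$, where $a_1,\dots,a_t\in\mathbb{N}_0$, $b_1,\dots,b_t\in\mathbb{R}$, $a_1<b_1<a_2<b_2<\cdots<a_t<b_t<\ell$,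 and $a_{k+1}-b_k>2$ for all $1\le k\le t-1$; (iii) if $\{I_{i_1},\dots,I_{i_t}\}\subseteq\{I_1,\dots,I_r\}$ satisfies $I_{i_p}\cap I_{i_q}\neq\emptyset$ for all $1\le p<q\le t$, then $\bigcap_{k=1}^t I_{i_k}\neq\emptyset$; (iv) if $I_p\cap I_q\neq\emptyset$ and $j\in I_p\setminus I_q$ for some $j\in\mathbb{N}_0$, then ($j+1\notin I_p$ implies $j+1\notin I_q$) and ($j-1\notin I_p$ implies $j-1\notin I_q$). *)

theory Defs
  imports Complex_Main
begin

text \<open>Intersection graph on an indexed family of sets: vertices are indices (distinct
indices give distinct vertices), adjacency = distinct indices whose sets meet.\<close>
definition ig_adj :: "('v \<Rightarrow> 'a set) \<Rightarrow> 'v \<Rightarrow> 'v \<Rightarrow> bool" where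
  "ig_adj S u v \<longleftrightarrow> u \<noteq> v \<and> S u \<inter> S v \<noteq> {}"

definition is_clique :: "'v set \<Rightarrow> ('v \<Rightarrow> 'v \<Rightarrow> bool) \<Rightarrow> 'v set \<Rightarrow> bool" where
  "is_clique V E C \<longleftrightarrow> C \<subseteq> V \<and> (\<forall>u\<in>C. \<forall>v\<in>C. u \<noteq> v \<longrightarrow> E u v)"

definition is_maximal_clique :: "'v set \<Rightarrow> ('v \<Rightarrow> 'v \<Rightarrow> bool) \<Rightarrow> 'v set \<Rightarrow> bool" where
  "is_maximal_clique V E C \<longleftrightarrow> is_clique V E C \<and> (\<forall>D. is_clique V E D \<and> C \<subseteq> D \<longrightarrow> D = C)"

definition maximal_cliques :: "'v set \<Rightarrow> ('v \<Rightarrow> 'v \<Rightarrow> bool) \<Rightarrow> 'v set set" where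
  "maximal_cliques V E = {C. is_maximal_clique V E C}"

definition num_max_cliques :: "'v set \<Rightarrow> ('v \<Rightarrow> 'v \<Rightarrow> bool) \<Rightarrow> nat" where
  "num_max_cliques V E = card (maximal_cliques V E)"

definition induced_path :: "'v set \<Rightarrow> ('v \<Rightarrow> 'v \<Rightarrow> bool) \<Rightarrow> 'v list \<Rightarrow> bool" where
  "induced_path V E p \<longleftrightarrow> p \<noteq> [] \<and> distinct p \<and> set p \<subseteq> V \<and>
     (\<forall>i<length p. \<forall>j<length p. E (p!i) (p!j) \<longleftrightarrow> (i = Suc j \<or> j = Suc i))"

definition longest_induced_path :: "'v set \<Rightarrow> ('v \<Rightarrow> 'v \<Rightarrow> bool) \<Rightarrow> nat" where
  "longest_induced_path V E = Max {length p - 1 | p. induced_path V E p}"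

definition Jset :: "nat \<Rightarrow> real set" where
  "Jset j = (if j = 0 then {0} else {real j - 1 .. real j})"

text \<open>Conditions (ii)-(iv) on I_1..I_r (condition (i) is built into Jset).\<close>
definition cond_ii :: "nat \<Rightarrow> real set \<Rightarrow> bool" where
  "cond_ii L A \<longleftrightarrow> (\<exists>t::nat. \<exists>a::nat \<Rightarrow> nat. \<exists>b::nat \<Rightarrow> real. t \<ge> 1 \<and>
      A = (\<Union>k\<in>{1..t}. {real (a k) .. b k}) \<and>
      (\<forall>k\<in>{1..t}. real (a k) < b k) \<and>
      (\<forall>k\<in>{1..<t}. b k < real (a (Suc k)) \<and> real (a (Suc k)) - b k > 2) \<and>
      b t < real L)"

definition cond_iii :: "nat \<Rightarrow> (nat \<Rightarrow> real set) \<Rightarrow> bool" where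
  "cond_iii r I \<longleftrightarrow> (\<forall>T. T \<subseteq> {1..r} \<longrightarrow>
      (\<forall>p\<in>T. \<forall>q\<in>T. I p \<inter> I q \<noteq> {}) \<longrightarrow> (\<Inter>k\<in>T. I k) \<noteq> {})"

definition cond_iv :: "nat \<Rightarrow> (nat \<Rightarrow> real set) \<Rightarrow> bool" where
  "cond_iv r I \<longleftrightarrow> (\<forall>p\<in>{1..r}. \<forall>q\<in>{1..r}. \<forall>j::nat.
      I p \<inter> I q \<noteq> {} \<and> real j \<in> I p \<and> real j \<notin> I q \<longrightarrow>
        (real j + 1 \<notin> I p \<longrightarrow> real j + 1 \<notin> I q) \<and>
        (real j - 1 \<notin> I p \<longrightarrow> real j - 1 \<notin> I q))"

text \<open>Vertices: Inl j is J_j (0 \<le> j \<le> L), Inr i is I_i (1 \<le> i \<le> r).\<close>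
definition CL_vertices :: "nat \<Rightarrow> nat \<Rightarrow> (nat + nat) set" where
  "CL_vertices L r = Inl ` {0..L} \<union> Inr ` {1..r}"

definition CL_sets :: "(nat \<Rightarrow> real set) \<Rightarrow> nat + nat \<Rightarrow> real set" where
  "CL_sets I = case_sum Jset I"

definition Fclique :: "nat \<Rightarrow> (nat \<Rightarrow> real set) \<Rightarrow> nat \<Rightarrow> (nat + nat) set" where
  "Fclique r I j = {Inl j, Inl (Suc j)} \<union> Inr ` {i \<in> {1..r}. real j \<in> I i}"

end

theory Submission
  imports Defs
begin

text \<open>
  Every clique of G lies in some F_j. If it contains two consecutive J_m, J_{m+1}, every I_i
  in it meets both and hence contains m, because the components of I_i are separated by gaps
  longer than 2. If it contains no J, the Helly property (iii) gives a common point of its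
  I_i, and rounding it down gives a common integer point, since components of I_i start at
  integers. If it contains exactly one J_k, each of its I_i contains k - 1 or k, and (iv)
  forbids mixing the two choices. The F_j are cliques and no two are nested, so they are
  exactly the maximal cliques. Two edges of an induced path cannot lie in a common clique,
  so an induced path has at most as many edges as there are maximal cliques; J_0, ..., J_l
  attains this bound.
\<close>

lemma maximal_cliques_eq_image:
  assumes cliques: "\<And>j. j \<in> J \<Longrightarrow> is_clique V E (F j)"
    and cover: "\<And>C. is_clique V E C \<Longrightarrow> \<exists>j\<in>J. C \<subseteq> F j"
    and antichain: "\<And>j j'. j \<in> J \<Longrightarrow> j' \<in> J \<Longrightarrow> F j \<subseteq> F j' \<Longrightarrow> j = j'"
  shows "maximal_cliques V E = F ` J"
proof
  show "maximal_cliques V E \<subseteq> F ` J"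
  proof
    fix C assume "C \<in> maximal_cliques V E"
    then have C: "is_maximal_clique V E C" by (simp add: maximal_cliques_def)
    then have "is_clique V E C" by (simp add: is_maximal_clique_def)
    then obtain j where "j \<in> J" "C \<subseteq> F j" using cover by blast
    moreover have "\<forall>D. is_clique V E D \<and> C \<subseteq> D \<longrightarrow> D = C"
      using C by (simp add: is_maximal_clique_def)
    ultimately have "F j = C" using cliques by blast
    then show "C \<in> F ` J" using \<open>j \<in> J\<close> by blast
  qed
next
  have "is_maximal_clique V E (F j)" if "j \<in> J" for j
    unfolding is_maximal_clique_def
  proof (intro conjI allI impI)
    fix D assume D: "is_clique V E D \<and> F j \<subseteq> D"
    then obtain j' where "j' \<in> J" "D \<subseteq> F j'" using cover by blast
    then have "j' = j" using D antichain[OF that, of j'] by auto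
    then show "D = F j" using D \<open>D \<subseteq> F j'\<close> by auto
  qed (use cliques that in blast)
  then show "F ` J \<subseteq> maximal_cliques V E" by (auto simp: maximal_cliques_def)
qed

lemma induced_path_length_le_card:
  assumes "finite J"
    and cliques: "\<And>j. j \<in> J \<Longrightarrow> is_clique V E (F j)"
    and cover: "\<And>C. is_clique V E C \<Longrightarrow> \<exists>j\<in>J. C \<subseteq> F j"
    and path: "induced_path V E p"
  shows "length p - 1 \<le> card J"
proof -
  define n where "n = length p - 1"
  have pV: "set p \<subseteq> V" and distinct: "distinct p"
    and pE: "\<And>i j. i < length p \<Longrightarrow> j < length p \<Longrightarrow> E (p!i) (p!j) \<longleftrightarrow> i = Suc j \<or> j = Suc i"
    using path by (auto simp: induced_path_def)
  have "\<exists>j\<in>J. {p!i, p!Suc i} \<subseteq> F j" if "i < n" for i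
  proof (rule cover)
    show "is_clique V E {p!i, p!Suc i}"
      unfolding is_clique_def using that pV pE[of i "Suc i"] pE[of "Suc i" i] by (auto simp: n_def)
  qed
  then obtain f where f: "\<And>i. i < n \<Longrightarrow> f i \<in> J \<and> {p!i, p!Suc i} \<subseteq> F (f i)" by metis
  have "f i \<noteq> f i'" if "i < i'" "i' < n" for i i'
  proof
    assume "f i = f i'"
    then have "p!i \<in> F (f i)" "p!Suc i' \<in> F (f i)" using f[of i] f[of i'] that by auto
    moreover have "p!i \<noteq> p!Suc i'" using distinct that by (simp add: n_def nth_eq_iff_index_eq)
    ultimately have "E (p!i) (p!Suc i')" using cliques f[of i] that by (auto simp: is_clique_def)
    moreover have "Suc i' < length p" using that by (simp add: n_def)
    ultimately show False using pE[of i "Suc i'"] that by simp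
  qed
  then have "inj_on f {..<n}" by (metis inj_onI lessThan_iff linorder_neq_iff)
  moreover have "f ` {..<n} \<subseteq> J" using f by auto
  ultimately have "card {..<n} \<le> card J" using \<open>finite J\<close> by (intro card_inj_on_le)
  then show ?thesis by (simp add: n_def)
qed

lemma separated_intervals_gap:
  fixes a :: "nat \<Rightarrow> nat" and b :: "nat \<Rightarrow> real"
  assumes "\<forall>k\<in>{1..t}. real (a k) < b k"
    and "\<forall>k\<in>{1..<t}. b k < real (a (Suc k)) \<and> real (a (Suc k)) - b k > 2"
    and "1 \<le> k1" "k1 < k2" "k2 \<le> t"
  shows "b k1 + 2 < real (a k2)"
  using assms(4,5)
proof (induction k2)
  case 0
  then show ?case by simp
next
  case (Suc n)
  show ?case
  proof (cases "k1 = n")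
    case True
    then have "n \<in> {1..<t}" using assms(3) Suc.prems by auto
    then have "real (a (Suc n)) - b n > 2" using assms(2) by blast
    then show ?thesis unfolding True by linarith
  next
    case False
    then have "b k1 + 2 < real (a n)" using Suc by auto
    moreover have "real (a n) < b n" "b n < real (a (Suc n))"
      using assms(1-3) Suc.prems False by auto
    ultimately show ?thesis by linarith
  qed
qed

lemma cond_ii_nonempty:
  assumes "cond_ii L A"
  shows "A \<noteq> {}"
proof -
  obtain t :: nat and a b where "t \<ge> 1" "A = (\<Union>k\<in>{1..t}. {real (a k) .. b k})" "real (a 1) < b 1"
    using assms unfolding cond_ii_def by force
  then have "real (a 1) \<in> A" by force
  then show ?thesis by blast
qed

lemma cond_ii_bounds:
  assumes "cond_ii L A" and "x \<in> A"
  shows "0 \<le> x" and "x < real L"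
proof -
  obtain t :: nat and a b where A: "A = (\<Union>k\<in>{1..t}. {real (a k) .. b k})"
    and ab: "\<forall>k\<in>{1..t}. real (a k) < b k"
    and gaps: "\<forall>k\<in>{1..<t}. b k < real (a (Suc k)) \<and> real (a (Suc k)) - b k > 2"
    and "b t < real L"
    using assms(1) unfolding cond_ii_def by blast
  obtain k where k: "k \<in> {1..t}" "real (a k) \<le> x" "x \<le> b k" using assms(2) A by auto
  have "b k \<le> b t"
  proof (cases "k = t")
    case False
    then have "b k + 2 < real (a t)" using separated_intervals_gap[OF ab gaps, of k t] k by auto
    moreover have "real (a t) < b t" using ab k by auto
    ultimately show ?thesis by linarith
  qed simp
  then show "x < real L" using k \<open>b t < real L\<close> by linarith
  show "0 \<le> x" using k by linarith
qed

lemma cond_ii_floor_mem: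
  assumes "cond_ii L A" and "x \<in> A"
  shows "real (nat \<lfloor>x\<rfloor>) \<in> A"
proof -
  obtain t :: nat and a b where A: "A = (\<Union>k\<in>{1..t}. {real (a k) .. b k})"
    using assms(1) unfolding cond_ii_def by blast
  obtain k where k: "k \<in> {1..t}" "real (a k) \<le> x" "x \<le> b k" using assms(2) A by auto
  have "int (a k) \<le> \<lfloor>x\<rfloor>" using k by (simp add: le_floor_iff)
  then have "real (a k) \<le> real (nat \<lfloor>x\<rfloor>)" "real (nat \<lfloor>x\<rfloor>) \<le> b k"
    using k of_int_floor_le[of x] by linarith+
  then show ?thesis using k A by auto
qed

lemma cond_ii_fill_short_gap:
  assumes "cond_ii L A" and "y \<in> A" "y' \<in> A" "y \<le> y'" "y' - y \<le> 2"
  shows "{y..y'} \<subseteq> A"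
proof -
  obtain t :: nat and a b where A: "A = (\<Union>k\<in>{1..t}. {real (a k) .. b k})"
    and ab: "\<forall>k\<in>{1..t}. real (a k) < b k"
    and gaps: "\<forall>k\<in>{1..<t}. b k < real (a (Suc k)) \<and> real (a (Suc k)) - b k > 2"
    using assms(1) unfolding cond_ii_def by blast
  obtain k where k: "k \<in> {1..t}" "real (a k) \<le> y" "y \<le> b k" using assms(2) A by auto
  obtain k' where k': "k' \<in> {1..t}" "real (a k') \<le> y'" "y' \<le> b k'" using assms(3) A by auto
  have "\<not> k < k'" "\<not> k' < k"
    using separated_intervals_gap[OF ab gaps, of k k'] separated_intervals_gap[OF ab gaps, of k' k]
      k k' assms(4,5) by force+
  then have "k = k'" by simp
  then show ?thesis using k k' A by auto
qed

lemma Jset_0 [simp]: "Jset 0 = {0}"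
  and Jset_Suc: "Jset (Suc m) = {real m .. real m + 1}"
  by (simp_all add: Jset_def)

lemma Jset_inter_nonempty_iff:
  "Jset i \<inter> Jset j \<noteq> {} \<longleftrightarrow> i = j \<or> i = Suc j \<or> j = Suc i"
  by (cases i; cases j) (auto simp: Jset_Suc max_def min_def)

lemma cond_ii_meets_consecutive_Jsets:
  assumes "cond_ii L A" and "A \<inter> Jset m \<noteq> {}" "A \<inter> Jset (Suc m) \<noteq> {}"
  shows "real m \<in> A"
proof (cases m)
  case (Suc m')
  obtain y where y: "y \<in> A" "real m - 1 \<le> y" "y \<le> real m"
    using assms(2) Suc by (auto simp: Jset_Suc add.commute)
  obtain y' where y': "y' \<in> A" "real m \<le> y'" "y' \<le> real m + 1"
    using assms(3) by (auto simp: Jset_Suc)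
  have "{y..y'} \<subseteq> A" using cond_ii_fill_short_gap[OF assms(1) y(1) y'(1)] y y' by auto
  then show ?thesis using y y' by auto
qed (use assms(2) in auto)

lemma cond_ii_meets_Jset_Suc:
  assumes "cond_ii L A" and "A \<inter> Jset (Suc k) \<noteq> {}"
  shows "real k \<in> A \<or> real (Suc k) \<in> A"
proof -
  obtain y where y: "y \<in> A" "real k \<le> y" "y \<le> real k + 1"
    using assms(2) by (auto simp: Jset_Suc)
  show ?thesis
  proof (cases "y = real k + 1")
    case False
    then have "nat \<lfloor>y\<rfloor> = k" using y by linarith
    then show ?thesis using cond_ii_floor_mem[OF assms(1) y(1)] by simp
  qed (use y in \<open>simp add: add.commute\<close>)
qed

lemma cond_iii_common_integer_point:
  assumes ii: "\<forall>i\<in>{1..r}. cond_ii L (I i)" and iii: "cond_iii r I"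
    and T: "T \<subseteq> {1..r}" "T \<noteq> {}"
    and pairwise: "\<forall>p\<in>T. \<forall>q\<in>T. p \<noteq> q \<longrightarrow> I p \<inter> I q \<noteq> {}"
  shows "\<exists>j<L. \<forall>i\<in>T. real j \<in> I i"
proof -
  have "I p \<inter> I q \<noteq> {}" if "p \<in> T" "q \<in> T" for p q
  proof (cases "p = q")
    case True
    then show ?thesis using cond_ii_nonempty[of L "I p"] ii T(1) that by auto
  qed (use pairwise that in blast)
  then have "(\<Inter>i\<in>T. I i) \<noteq> {}" using iii T(1) by (simp add: cond_iii_def)
  then obtain x where x: "\<forall>i\<in>T. x \<in> I i" by blast
  obtain i0 where i0: "i0 \<in> T" using T(2) by blast
  have "0 \<le> x" "x < real L" using cond_ii_bounds[of L "I i0" x] ii T(1) i0 x by auto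
  then have "nat \<lfloor>x\<rfloor> < L" by linarith
  moreover have "\<forall>i\<in>T. real (nat \<lfloor>x\<rfloor>) \<in> I i" using cond_ii_floor_mem ii T(1) x by blast
  ultimately show ?thesis by blast
qed

lemma cond_iv_common_point_near_Jset:
  assumes "L \<ge> 1" and ii: "\<forall>i\<in>{1..r}. cond_ii L (I i)" and iv: "cond_iv r I"
    and T: "T \<subseteq> {1..r}" and "k \<le> L" and meets: "\<forall>i\<in>T. I i \<inter> Jset k \<noteq> {}"
    and pairwise: "\<forall>p\<in>T. \<forall>q\<in>T. p \<noteq> q \<longrightarrow> I p \<inter> I q \<noteq> {}"
  shows "\<exists>j<L. (j = k \<or> Suc j = k) \<and> (\<forall>i\<in>T. real j \<in> I i)"
proof (cases k)
  case 0
  then show ?thesis using \<open>L \<ge> 1\<close> meets by auto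
next
  case (Suc k')
  have either: "real k' \<in> I i \<or> real k \<in> I i" if "i \<in> T" for i
    using cond_ii_meets_Jset_Suc[of L "I i" k'] ii T meets that Suc by auto
  show ?thesis
  proof (cases "\<forall>i\<in>T. real k' \<in> I i")
    case True
    then show ?thesis using Suc \<open>k \<le> L\<close> by (intro exI[of _ k']) auto
  next
    case False
    then obtain i0 where i0: "i0 \<in> T" "real k' \<notin> I i0" "real k \<in> I i0" using either by blast
    then have "k < L" using cond_ii_bounds(2)[of L "I i0" "real k"] ii T by auto
    have "real k \<in> I i" if i: "i \<in> T" for i
    proof (rule ccontr)
      assume k_notin: "real k \<notin> I i"
      have "real k' \<in> I i" using either i k_notin by blast
      moreover have "i \<noteq> i0" using k_notin i0 by blast
      then have "I i \<inter> I i0 \<noteq> {}" using pairwise i i0(1) by blast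
      ultimately have "real k' + 1 \<notin> I i \<longrightarrow> real k' + 1 \<notin> I i0"
        using iv i i0 T unfolding cond_iv_def by blast
      then show False using k_notin i0 Suc by (auto simp: add.commute)
    qed
    then show ?thesis using \<open>k < L\<close> by blast
  qed
qed

lemma ig_adj_CL_sets_simps [simp]:
  "ig_adj (CL_sets I) (Inl i) (Inl j) \<longleftrightarrow> i \<noteq> j \<and> Jset i \<inter> Jset j \<noteq> {}"
  "ig_adj (CL_sets I) (Inl j) (Inr i) \<longleftrightarrow> Jset j \<inter> I i \<noteq> {}"
  "ig_adj (CL_sets I) (Inr i) (Inl j) \<longleftrightarrow> I i \<inter> Jset j \<noteq> {}"
  "ig_adj (CL_sets I) (Inr i) (Inr j) \<longleftrightarrow> i \<noteq> j \<and> I i \<inter> I j \<noteq> {}"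
  by (auto simp: ig_adj_def CL_sets_def)

lemma Inl_mem_Fclique_iff [simp]: "Inl m \<in> Fclique r I j \<longleftrightarrow> m = j \<or> m = Suc j"
  and Inr_mem_Fclique_iff [simp]: "Inr i \<in> Fclique r I j \<longleftrightarrow> i \<in> {1..r} \<and> real j \<in> I i"
  by (auto simp: Fclique_def)

lemma Fclique_subset_imp_eq:
  assumes "Fclique r I j \<subseteq> Fclique r I j'"
  shows "j = j'"
  using subsetD[OF assms, of "Inl j"] subsetD[OF assms, of "Inl (Suc j)"] by auto

lemma Fclique_is_clique:
  assumes "j < L"
  shows "is_clique (CL_vertices L r) (ig_adj (CL_sets I)) (Fclique r I j)"
  unfolding is_clique_def
proof (intro conjI ballI impI)
  show "Fclique r I j \<subseteq> CL_vertices L r"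
    using assms by (auto simp: Fclique_def CL_vertices_def)
next
  fix u v assume u: "u \<in> Fclique r I j" and v: "v \<in> Fclique r I j" and "u \<noteq> v"
  have "real j \<in> CL_sets I u" "real j \<in> CL_sets I v"
    using u v by (auto simp: Fclique_def CL_sets_def Jset_def)
  then show "ig_adj (CL_sets I) u v" using \<open>u \<noteq> v\<close> by (auto simp: ig_adj_def)
qed

lemma induced_path_Jsets:
  "induced_path (CL_vertices L r) (ig_adj (CL_sets I)) (map Inl [0..<Suc L])"
  unfolding induced_path_def
proof (intro conjI allI impI)
  show "set (map Inl [0..<Suc L]) \<subseteq> CL_vertices L r"
    by (auto simp: CL_vertices_def)
  fix i j assume "i < length (map Inl [0..<Suc L])" "j < length (map Inl [0..<Suc L])"
  then show "ig_adj (CL_sets I) (map Inl [0..<Suc L] ! i) (map Inl [0..<Suc L] ! j)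
      \<longleftrightarrow> i = Suc j \<or> j = Suc i"
    by (auto simp: Jset_inter_nonempty_iff simp del: upt_Suc)
qed (auto simp: distinct_map simp del: upt_Suc)

lemma clique_Jsets_consecutive:
  assumes "is_clique (CL_vertices L r) (ig_adj (CL_sets I)) C"
    and "Inl k \<in> C" "Inl k' \<in> C" "k < k'"
  shows "k' = Suc k"
proof -
  have "Inl k \<noteq> (Inl k' :: nat + nat)" using \<open>k < k'\<close> by simp
  then have "ig_adj (CL_sets I) (Inl k) (Inl k')"
    using assms(1-3) unfolding is_clique_def by blast
  then have "Jset k \<inter> Jset k' \<noteq> {}" by simp
  then show ?thesis using \<open>k < k'\<close> unfolding Jset_inter_nonempty_iff by linarith
qed

lemma clique_with_consecutive_Jsets_subset_Fclique:
  assumes ii: "\<forall>i\<in>{1..r}. cond_ii L (I i)"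
    and C: "is_clique (CL_vertices L r) (ig_adj (CL_sets I)) C"
    and m: "Inl m \<in> C" "Inl (Suc m) \<in> C"
  shows "C \<subseteq> Fclique r I m"
proof
  fix v assume "v \<in> C"
  then have V: "v \<in> CL_vertices L r"
    and adj: "v \<noteq> Inl m \<Longrightarrow> ig_adj (CL_sets I) v (Inl m)"
      "v \<noteq> Inl (Suc m) \<Longrightarrow> ig_adj (CL_sets I) v (Inl (Suc m))"
    using C m unfolding is_clique_def by auto
  show "v \<in> Fclique r I m"
  proof (cases v)
    case (Inl n)
    then show ?thesis using adj by (auto simp: Jset_inter_nonempty_iff)
  next
    case (Inr i)
    then have i: "i \<in> {1..r}" using V by (auto simp: CL_vertices_def)
    then have "real m \<in> I i"
      using cond_ii_meets_consecutive_Jsets[of L "I i" m] ii adj Inr by (auto simp: Int_commute)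
    then show ?thesis using i Inr by simp
  qed
qed

lemma clique_subset_Fclique:
  assumes "L \<ge> 1" and ii: "\<forall>i\<in>{1..r}. cond_ii L (I i)" and iii: "cond_iii r I"
    and iv: "cond_iv r I" and C: "is_clique (CL_vertices L r) (ig_adj (CL_sets I)) C"
  shows "\<exists>j<L. C \<subseteq> Fclique r I j"
proof -
  have CV: "C \<subseteq> CL_vertices L r"
    and adj: "\<And>u v. u \<in> C \<Longrightarrow> v \<in> C \<Longrightarrow> u \<noteq> v \<Longrightarrow> ig_adj (CL_sets I) u v"
    using C by (auto simp: is_clique_def)
  define K where "K = {k. Inl k \<in> C}"
  define T where "T = {i. Inr i \<in> C}"
  have C_eq: "C = Inl ` K \<union> Inr ` T"
  proof
    show "C \<subseteq> Inl ` K \<union> Inr ` T"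
    proof
      fix v assume "v \<in> C"
      then show "v \<in> Inl ` K \<union> Inr ` T" by (cases v) (auto simp: K_def T_def)
    qed
  qed (auto simp: K_def T_def)
  have T: "T \<subseteq> {1..r}" and K: "K \<subseteq> {0..L}" using CV by (auto simp: T_def K_def CL_vertices_def)
  have pairwise: "\<forall>p\<in>T. \<forall>q\<in>T. p \<noteq> q \<longrightarrow> I p \<inter> I q \<noteq> {}"
  proof (intro ballI impI)
    fix p q assume "p \<in> T" "q \<in> T" "p \<noteq> q"
    then show "I p \<inter> I q \<noteq> {}" using adj[of "Inr p" "Inr q"] by (simp add: T_def)
  qed
  consider "K = {}" | k where "K = {k}" | m where "m \<in> K" "Suc m \<in> K"
  proof (cases "K = {}")
    case False
    then obtain k where "k \<in> K" by blast
    show thesis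
    proof (cases "K = {k}")
      case False
      then obtain k' where "k' \<in> K" "k' \<noteq> k" using \<open>k \<in> K\<close> by blast
      then consider "k < k'" | "k' < k" by linarith
      then show thesis
        using clique_Jsets_consecutive[OF C] \<open>k \<in> K\<close> \<open>k' \<in> K\<close> that(3) unfolding K_def
        by cases blast+
    qed (use that(2) in blast)
  qed (use that(1) in blast)
  then show ?thesis
  proof cases
    case 1
    show ?thesis
    proof (cases "T = {}")
      case True
      then show ?thesis using C_eq 1 \<open>L \<ge> 1\<close> by (intro exI[of _ 0]) auto
    next
      case False
      then obtain j where "j < L" "\<forall>i\<in>T. real j \<in> I i"
        using cond_iii_common_integer_point[OF ii iii T] pairwise by blast
      moreover from this have "C \<subseteq> Fclique r I j" using C_eq 1 T by auto
      ultimately show ?thesis by blast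
    qed
  next
    case (2 k)
    have "Inl k \<in> C" using 2 unfolding K_def by (metis mem_Collect_eq singletonI)
    then have "\<forall>i\<in>T. I i \<inter> Jset k \<noteq> {}" using adj[of "Inr _" "Inl k"] by (simp add: T_def)
    then obtain j where "j < L" "j = k \<or> Suc j = k" "\<forall>i\<in>T. real j \<in> I i"
      using cond_iv_common_point_near_Jset[OF \<open>L \<ge> 1\<close> ii iv T] K 2 pairwise by auto
    moreover from this have "C \<subseteq> Fclique r I j" using C_eq 2 T by auto
    ultimately show ?thesis by blast
  next
    case (3 m)
    then have "m < L" using K by auto
    then show ?thesis
      using clique_with_consecutive_Jsets_subset_Fclique[OF ii C] 3 by (auto simp: K_def)
  qed
qed

theorem mainTheorem4:
  fixes L r :: nat and I :: "nat \<Rightarrow> real set"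
  assumes "L \<ge> 1"
    and "\<forall>i\<in>{1..r}. cond_ii L (I i)"
    and "cond_iii r I"
    and "cond_iv r I"
  shows "maximal_cliques (CL_vertices L r) (ig_adj (CL_sets I)) = Fclique r I ` {0..<L}
       \<and> num_max_cliques (CL_vertices L r) (ig_adj (CL_sets I)) = L
       \<and> longest_induced_path (CL_vertices L r) (ig_adj (CL_sets I)) = L
       \<and> induced_path (CL_vertices L r) (ig_adj (CL_sets I)) (map Inl [0..<Suc L])"
proof -
  let ?V = "CL_vertices L r" and ?E = "ig_adj (CL_sets I)" and ?F = "Fclique r I"
  have cliques: "\<And>j. j \<in> {0..<L} \<Longrightarrow> is_clique ?V ?E (?F j)"
    using Fclique_is_clique by simp
  have cover: "\<And>C. is_clique ?V ?E C \<Longrightarrow> \<exists>j\<in>{0..<L}. C \<subseteq> ?F j"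
    using clique_subset_Fclique[OF assms] by fastforce
  have max_cliques: "maximal_cliques ?V ?E = ?F ` {0..<L}"
    using maximal_cliques_eq_image[OF cliques cover] Fclique_subset_imp_eq by blast
  have "inj_on ?F {0..<L}" by (rule inj_onI) (use Fclique_subset_imp_eq in blast)
  then have "num_max_cliques ?V ?E = L"
    by (simp add: num_max_cliques_def max_cliques card_image)
  moreover have "longest_induced_path ?V ?E = L"
    unfolding longest_induced_path_def
  proof (rule Max_eqI)
    have "\<And>p. induced_path ?V ?E p \<Longrightarrow> length p - 1 \<le> L"
      using induced_path_length_le_card[OF _ cliques cover] by fastforce
    then show "finite {length p - 1 |p. induced_path ?V ?E p}"
      and "\<And>n. n \<in> {length p - 1 |p. induced_path ?V ?E p} \<Longrightarrow> n \<le> L"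
      by (auto intro: finite_subset[of _ "{..L}"])
    show "L \<in> {length p - 1 |p. induced_path ?V ?E p}"
      using induced_path_Jsets[of L r I] by (force simp del: upt_Suc)
  qed
  ultimately show ?thesis using max_cliques induced_path_Jsets by blast
qed

end
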